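(* Let $X\in\mathbb{R}^d$, $Y\in\mathbb{R}$, $H\in\mathbb{R}^q$, $I\in\mathbb{R}^m$ be generated by the linear structural causal model $$X := BX + AI + h(H,\epsilon^X),\qquad Y := X^\top\beta^* + g(H,\epsilon^Y),$$ where $B\in\mathbb{R}^{d\times d}$ with $\operatorname{Id}-B$ invertible, $A\in\mathbb{R}^{d\times m}$, $\beta^*\in\mathbb{R}^d$, $h,g$ are arbitrary measurable functions, $I,H,\epsilon^X,\epsilon^Y$ are jointly independent, and $\operatorname{Cov}[I]$ is invertible. Let $C:=A^\top(\operatorname{Id}-B)^{-\top}\in\mathbb{R}^{m\times d}$, $\operatorname{PA}(Y):=\{j:\beta^*_j\neq 0\}$, and $\mathcal{B}:=\{\beta\in\mathbb{R}^d : \operatorname{Cov}(I,X)\beta=\operatorname{Cov}(I,Y)\}$. Consider the assumptions (A1) $\operatorname{rank}(C_{\operatorname{PA}(Y)})=|\operatorname{PA}(Y)|$; (A2) for all $S\subseteq\{1,\dots,d\}$: if $\operatorname{rank}(C_S)\le\operatorname{rank}(C_{\operatorname{PA}(Y)})$ and $\operatorname{im}(C_S)\neq\operatorname{im}(C_{\operatorname{PA}(Y)})$, then $C_S w\neq C_{\operatorname{PA}(Y)}\beta^*_{\operatorname{PA}(Y)}$ for all $w\in\mathbb{R}^{|S|}$; (A3) for all $S\subseteq\{1,\dots,d\}$ with $|S|=|\operatorname{PA}(Y)|$ and $S\neq\operatorname{PA}(Y)$, $\operatorname{im}(C_S)\neq\operatorname{im}(C_{\operatorname{PA}(Y)})$.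 If (A1) and (A2) hold, then $\beta^*$ is a solution of $\min_{\beta\in\mathcal{B}}\|\beta\|_0$. If in addition (A3) holds, then $\beta^*$ is the unique solution of this problem.
   Context: For a matrix $D\in\mathbb{R}^{m\times d}$ and $S\subseteq\{1,\dots,d\}$, $D_S$ is the $m\times|S|$ submatrix consisting of the columns indexed by $S$, and $\operatorname{im}(D)$ is the image (column space) of $D$. For a vector $v$, $v_S$ is the subvector indexed by $S$. $\|\beta\|_0$ is the number of non-zero entries of $\beta$. All covariances involved are assumed to exist. *)

theory Defs
  imports "HOL-Probability.Probability"
begin

text \<open>Joint (mutual) independence of four random variables taking values in
  possibly different measurable spaces; this is literally the definition of
  indep_vars, specialised to an index set of four elements (indep_vars itself
  needs a common value type).\<close>
definition (in prob_space) indep4 ::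
  "'b1 measure \<Rightarrow> ('a \<Rightarrow> 'b1) \<Rightarrow> 'b2 measure \<Rightarrow> ('a \<Rightarrow> 'b2) \<Rightarrow>
   'b3 measure \<Rightarrow> ('a \<Rightarrow> 'b3) \<Rightarrow> 'b4 measure \<Rightarrow> ('a \<Rightarrow> 'b4) \<Rightarrow> bool" where
  "indep4 N1 X1 N2 X2 N3 X3 N4 X4 \<longleftrightarrow>
     random_variable N1 X1 \<and> random_variable N2 X2 \<and>
     random_variable N3 X3 \<and> random_variable N4 X4 \<and>
     indep_sets (\<lambda>i::nat.
        if i = 0 then { X1 -` A \<inter> space M | A. A \<in> sets N1}
        else if i = 1 then { X2 -` A \<inter> space M | A. A \<in> sets N2}
        else if i = 2 then { X3 -` A \<inter> space M | A. A \<in> sets N3}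
        else { X4 -` A \<inter> space M | A. A \<in> sets N4}) {0,1,2,3}"

definition cross_cov :: "'w measure \<Rightarrow> ('w \<Rightarrow> real^'m) \<Rightarrow> ('w \<Rightarrow> real^'n) \<Rightarrow> real^'n^'m" where
  "cross_cov M U V = (\<chi> i j. integral\<^sup>L M (\<lambda>\<omega>.
      (U \<omega> $ i - integral\<^sup>L M (\<lambda>\<omega>. U \<omega> $ i)) * (V \<omega> $ j - integral\<^sup>L M (\<lambda>\<omega>. V \<omega> $ j))))"

definition cross_cov_vec :: "'w measure \<Rightarrow> ('w \<Rightarrow> real^'m) \<Rightarrow> ('w \<Rightarrow> real) \<Rightarrow> real^'m" where
  "cross_cov_vec M U Y = (\<chi> i. integral\<^sup>L M (\<lambda>\<omega>.
      (U \<omega> $ i - integral\<^sup>L M (\<lambda>\<omega>. U \<omega> $ i)) * (Y \<omega> - integral\<^sup>L M Y)))"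

text \<open>Image of the column submatrix C_S: {C_S w | w in R^|S|}, where C_S w is
  written as C applied to the zero-extension of w to all indices.\<close>
definition sub_im :: "real^'d^'m \<Rightarrow> 'd set \<Rightarrow> (real^'m) set" where
  "sub_im C S = {C *v w | w. \<forall>j. j \<notin> S \<longrightarrow> w $ j = 0}"

definition sub_rank :: "real^'d^'m \<Rightarrow> 'd set \<Rightarrow> nat" where
  "sub_rank C S = dim (sub_im C S)"

definition restr :: "'d set \<Rightarrow> real^'d \<Rightarrow> real^'d" where
  "restr S v = (\<chi> j. if j \<in> S then v $ j else 0)"

definition supp_vec :: "real^'d \<Rightarrow> 'd set" where
  "supp_vec v = {j. v $ j \<noteq> 0}"

definition l0 :: "real^'d \<Rightarrow> nat" where
  "l0 v = card (supp_vec v)"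

end

(* Cov(I, .) is linear, and it annihilates the hidden terms h(H, eX) and g(H, eY) because
   these are functions of variables independent of I.  Solving the structural equation for X
   therefore gives Cov(I, X) = Cov(I, I) C and Cov(I, Y) = Cov(I, I) C beta*, and since Cov(I, I)
   is invertible the feasible set is {beta. C beta = C beta*}.  If a feasible beta has support S
   with |S| <= |PA|, then rank(C_S) <= |S| <= |PA| = rank(C_PA) by (A1) while C beta* lies in
   im(C_S), so (A2) forces im(C_S) = im(C_PA) and hence |S| >= |PA|.  Under (A3) this gives
   S = PA, and injectivity of C on vectors supported in PA (again (A1)) gives beta = beta*. *)
theory Submission
  imports Defs
begin

section \<open>Sparsest solutions of C \<beta> = C \<beta>*\<close>

lemma sub_imI:
  fixes C :: "real^'d^'m"
  assumes "supp_vec w \<subseteq> S"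
  shows "C *v w \<in> sub_im C S"
  using assms by (auto simp: sub_im_def supp_vec_def)

lemma matrix_mult_sum_supp:
  fixes C :: "real^'d^'m"
  assumes "supp_vec w \<subseteq> S"
  shows "C *v w = (\<Sum>j\<in>S. w $ j *\<^sub>R column j C)"
proof -
  have "C *v w = (\<Sum>j\<in>UNIV. w $ j *s column j C)" by (simp add: matrix_mult_sum)
  also have "\<dots> = (\<Sum>j\<in>S. w $ j *s column j C)"
    by (rule sum.mono_neutral_right) (use assms in \<open>auto simp: supp_vec_def\<close>)
  finally show ?thesis by (simp add: scalar_mult_eq_scaleR)
qed

lemma sub_im_subset_span_columns:
  fixes C :: "real^'d^'m"
  shows "sub_im C S \<subseteq> span ((\<lambda>j. column j C) ` S)"
proof
  fix v assume "v \<in> sub_im C S"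
  then obtain w where "supp_vec w \<subseteq> S" "v = C *v w"
    by (auto simp: sub_im_def supp_vec_def)
  then have "v = (\<Sum>j\<in>S. w $ j *\<^sub>R column j C)" by (simp add: matrix_mult_sum_supp)
  also have "\<dots> \<in> span ((\<lambda>j. column j C) ` S)"
    by (intro span_sum span_mul span_base) auto
  finally show "v \<in> span ((\<lambda>j. column j C) ` S)" .
qed

lemma sub_rank_le_card:
  fixes C :: "real^'d^'m"
  shows "sub_rank C S \<le> card S"
proof -
  have "sub_rank C S \<le> card ((\<lambda>j. column j C) ` S)"
    unfolding sub_rank_def by (rule dim_le_card[OF sub_im_subset_span_columns]) simp
  also have "\<dots> \<le> card S" by (rule card_image_le) simp
  finally show ?thesis .
qed

text \<open>If rank(C_S) = |S|, the columns of C indexed by S are distinct and linearly independent.\<close>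
lemma full_sub_rank_injective:
  fixes C :: "real^'d^'m"
  assumes rank: "sub_rank C S = card S"
    and v: "supp_vec v \<subseteq> S" and w: "supp_vec w \<subseteq> S" and eq: "C *v v = C *v w"
  shows "v = w"
proof -
  define col where "col j = column j C" for j
  have "card S \<le> dim (col ` S)"
    using rank dim_subset[OF sub_im_subset_span_columns, of C S] by (simp add: sub_rank_def col_def)
  moreover have "dim (col ` S) \<le> card (col ` S)" by (simp add: dim_le_card')
  moreover have "card (col ` S) \<le> card S" by (rule card_image_le) simp
  ultimately have card_col: "card (col ` S) = card S" and dim_col: "dim (col ` S) = card (col ` S)"
    by linarith+
  have indep: "independent (col ` S)"
    using card_eq_dim[OF subset_refl dim_col[symmetric]] by (simp add: span_superset)
  have inj: "inj_on col S" using card_col by (intro eq_card_imp_inj_on) auto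
  have supp_diff: "supp_vec (v - w) \<subseteq> S" using v w by (force simp: supp_vec_def)
  then have "(\<Sum>j\<in>S. (v - w) $ j *\<^sub>R col j) = 0"
    using matrix_mult_sum_supp[of "v - w" S C] eq
    by (simp add: col_def matrix_vector_mult_diff_distrib)
  then have "(\<Sum>u\<in>col ` S. (v - w) $ the_inv_into S col u *\<^sub>R u) = 0"
    by (simp add: sum.reindex[OF inj] the_inv_into_f_f[OF inj])
  then have "\<forall>u\<in>col ` S. (v - w) $ the_inv_into S col u = 0"
    using indep unfolding independent_explicit
    by (auto dest!: spec[where x="\<lambda>u. (v - w) $ the_inv_into S col u"])
  then have "(v - w) $ j = 0" if "j \<in> S" for j
    using that by (simp add: the_inv_into_f_f[OF inj])
  then show "v = w" using supp_diff by (force simp: vec_eq_iff supp_vec_def)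
qed

lemma restr_supp_vec [simp]: "restr (supp_vec v) v = v"
  by (auto simp: restr_def supp_vec_def vec_eq_iff)

context
  fixes C :: "real^'d^'m" and \<beta>s :: "real^'d"
  assumes A1: "sub_rank C (supp_vec \<beta>s) = card (supp_vec \<beta>s)"
    and A2: "\<forall>S. sub_rank C S \<le> sub_rank C (supp_vec \<beta>s) \<and> sub_im C S \<noteq> sub_im C (supp_vec \<beta>s)
               \<longrightarrow> C *v \<beta>s \<notin> sub_im C S"
begin

lemma sparse_solution_sub_im_eq:
  assumes sol: "C *v \<beta> = C *v \<beta>s" and sparse: "l0 \<beta> \<le> l0 \<beta>s"
  shows "sub_im C (supp_vec \<beta>) = sub_im C (supp_vec \<beta>s)"
proof -
  have "sub_rank C (supp_vec \<beta>) \<le> sub_rank C (supp_vec \<beta>s)"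
    using sub_rank_le_card[of C "supp_vec \<beta>"] sparse A1 by (simp add: l0_def)
  moreover have "C *v \<beta>s \<in> sub_im C (supp_vec \<beta>)"
    using sub_imI[of \<beta> "supp_vec \<beta>" C] sol by simp
  ultimately show ?thesis using A2 by blast
qed

lemma sparsest_solution:
  assumes sol: "C *v \<beta> = C *v \<beta>s"
  shows "l0 \<beta>s \<le> l0 \<beta>"
proof (rule ccontr)
  assume "\<not> l0 \<beta>s \<le> l0 \<beta>"
  then have "sub_im C (supp_vec \<beta>) = sub_im C (supp_vec \<beta>s)"
    using sparse_solution_sub_im_eq[OF sol] by simp
  then have "card (supp_vec \<beta>s) \<le> l0 \<beta>"
    using A1 sub_rank_le_card[of C "supp_vec \<beta>"] by (simp add: sub_rank_def l0_def)
  with \<open>\<not> l0 \<beta>s \<le> l0 \<beta>\<close> show False by (simp add: l0_def)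
qed

lemma sparsest_solution_unique:
  assumes A3: "\<forall>S. card S = card (supp_vec \<beta>s) \<and> S \<noteq> supp_vec \<beta>s
                 \<longrightarrow> sub_im C S \<noteq> sub_im C (supp_vec \<beta>s)"
    and sol: "C *v \<beta> = C *v \<beta>s" and sparse: "l0 \<beta> \<le> l0 \<beta>s"
  shows "\<beta> = \<beta>s"
proof -
  have "card (supp_vec \<beta>) = card (supp_vec \<beta>s)"
    using sparse sparsest_solution[OF sol] by (simp add: l0_def)
  then have "supp_vec \<beta> = supp_vec \<beta>s"
    using A3 sparse_solution_sub_im_eq[OF sol sparse] by blast
  then show ?thesis
    using full_sub_rank_injective[OF A1 _ _ sol] by simp
qed

end

section \<open>Covariances\<close>

text \<open>Cov(u, v) in the form E[u v] - E u E v, which is additive in v as soon as v and u v are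
  integrable (cov_integrable); cross_cov agrees with it entrywise (cross_cov_eq_cov).\<close>
definition cov :: "'w measure \<Rightarrow> ('w \<Rightarrow> real) \<Rightarrow> ('w \<Rightarrow> real) \<Rightarrow> real" where
  "cov M u v = (\<integral>\<omega>. u \<omega> * v \<omega> \<partial>M) - (\<integral>\<omega>. u \<omega> \<partial>M) * (\<integral>\<omega>. v \<omega> \<partial>M)"

definition cov_integrable :: "'w measure \<Rightarrow> ('w \<Rightarrow> real) \<Rightarrow> ('w \<Rightarrow> real) \<Rightarrow> bool" where
  "cov_integrable M u v \<longleftrightarrow> integrable M v \<and> integrable M (\<lambda>\<omega>. u \<omega> * v \<omega>)"

lemma (in prob_space) centered_integral_eq_cov:
  assumes "integrable M u" and "cov_integrable M u v"
  shows "(\<integral>\<omega>. (u \<omega> - (\<integral>\<omega>. u \<omega> \<partial>M)) * (v \<omega> - (\<integral>\<omega>. v \<omega> \<partial>M)) \<partial>M) = cov M u v"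
proof -
  define a where "a = (\<integral>\<omega>. u \<omega> \<partial>M)"
  define b where "b = (\<integral>\<omega>. v \<omega> \<partial>M)"
  have "(\<lambda>\<omega>. (u \<omega> - a) * (v \<omega> - b)) = (\<lambda>\<omega>. u \<omega> * v \<omega> - (b * u \<omega> + a * v \<omega>) + a * b)"
    by (auto simp: algebra_simps)
  then have "(\<integral>\<omega>. (u \<omega> - a) * (v \<omega> - b) \<partial>M) = (\<integral>\<omega>. u \<omega> * v \<omega> \<partial>M) - (b * a + a * b) + a * b"
    using assms by (simp add: cov_integrable_def a_def b_def prob_space)
  then show ?thesis by (simp add: cov_def a_def b_def)
qed

lemma
  assumes "\<And>\<omega>. \<omega> \<in> space M \<Longrightarrow> v \<omega> = v' \<omega>"
  shows cov_integrable_cong: "cov_integrable M u v \<longleftrightarrow> cov_integrable M u v'"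
    and cov_cong: "cov M u v = cov M u v'"
proof -
  have "integrable M v \<longleftrightarrow> integrable M v'"
    and "integrable M (\<lambda>\<omega>. u \<omega> * v \<omega>) \<longleftrightarrow> integrable M (\<lambda>\<omega>. u \<omega> * v' \<omega>)"
    and "integral\<^sup>L M v = integral\<^sup>L M v'"
    and "(\<integral>\<omega>. u \<omega> * v \<omega> \<partial>M) = (\<integral>\<omega>. u \<omega> * v' \<omega> \<partial>M)"
    by (intro Bochner_Integration.integrable_cong Bochner_Integration.integral_cong refl; simp add: assms)+
  then show "cov_integrable M u v \<longleftrightarrow> cov_integrable M u v'" and "cov M u v = cov M u v'"
    by (simp_all add: cov_integrable_def cov_def)
qed

lemma cov_add:
  assumes "cov_integrable M u v" "cov_integrable M u v'"
  shows "cov M u (\<lambda>\<omega>. v \<omega> + v' \<omega>) = cov M u v + cov M u v'"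
  using assms by (auto simp: cov_integrable_def cov_def algebra_simps)

lemma cov_integrable_diff:
  assumes "cov_integrable M u v" "cov_integrable M u v'"
  shows "cov_integrable M u (\<lambda>\<omega>. v \<omega> - v' \<omega>)"
  using assms by (auto simp: cov_integrable_def algebra_simps)

lemma
  assumes "\<And>l. l \<in> L \<Longrightarrow> cov_integrable M u (v l)"
  shows cov_integrable_sum: "cov_integrable M u (\<lambda>\<omega>. \<Sum>l\<in>L. c l * v l \<omega>)"
    and cov_sum: "cov M u (\<lambda>\<omega>. \<Sum>l\<in>L. c l * v l \<omega>) = (\<Sum>l\<in>L. c l * cov M u (v l))"
proof -
  have prod: "(\<lambda>\<omega>. u \<omega> * (\<Sum>l\<in>L. c l * v l \<omega>)) = (\<lambda>\<omega>. \<Sum>l\<in>L. c l * (u \<omega> * v l \<omega>))"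
    by (auto simp: sum_distrib_left algebra_simps)
  show "cov_integrable M u (\<lambda>\<omega>. \<Sum>l\<in>L. c l * v l \<omega>)"
    using assms unfolding cov_integrable_def prod by auto
  show "cov M u (\<lambda>\<omega>. \<Sum>l\<in>L. c l * v l \<omega>) = (\<Sum>l\<in>L. c l * cov M u (v l))"
    using assms unfolding cov_def prod cov_integrable_def
    by (simp add: sum_distrib_left sum_subtractf algebra_simps)
qed

section \<open>Independence\<close>

lemma Int_stable_vimage_sets: "Int_stable {X -` A \<inter> \<Omega> | A. A \<in> sets N}"
proof (rule Int_stableI)
  fix a b assume "a \<in> {X -` A \<inter> \<Omega> | A. A \<in> sets N}" "b \<in> {X -` A \<inter> \<Omega> | A. A \<in> sets N}"
  then obtain A B where "a = X -` A \<inter> \<Omega>" "b = X -` B \<inter> \<Omega>" "A \<in> sets N" "B \<in> sets N"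
    by blast
  then show "a \<inter> b \<in> {X -` A \<inter> \<Omega> | A. A \<in> sets N}"
    by (auto intro!: exI[of _ "A \<inter> B"])
qed

lemma measurable_Pair_sigma_vimage_sets:
  assumes "X \<in> \<Omega> \<rightarrow> space N1" and "Y \<in> \<Omega> \<rightarrow> space N2"
  shows "(\<lambda>\<omega>. (X \<omega>, Y \<omega>)) \<in> measurable
           (sigma \<Omega> ({X -` A \<inter> \<Omega> | A. A \<in> sets N1} \<union> {Y -` A \<inter> \<Omega> | A. A \<in> sets N2}))
           (N1 \<Otimes>\<^sub>M N2)"
  (is "_ \<in> measurable ?S _")
proof (rule measurable_Pair)
  have space: "space ?S = \<Omega>"
    and sets: "sets ?S = sigma_sets \<Omega>
                 ({X -` A \<inter> \<Omega> | A. A \<in> sets N1} \<union> {Y -` A \<inter> \<Omega> | A. A \<in> sets N2})"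
    by (auto intro!: space_measure_of sets_measure_of)
  show "X \<in> measurable ?S N1" and "Y \<in> measurable ?S N2"
    using assms unfolding measurable_def space sets by (auto intro: sigma_sets.Basic)
qed

lemma (in prob_space) indep_set_sigma_sets_Un:
  assumes indep: "indep_sets E K" and "a \<in> K" "b \<in> K" "c \<in> K" "a \<noteq> b" "a \<noteq> c"
    and "Int_stable (E a)" "Int_stable (E b)" "Int_stable (E c)"
  shows "indep_set (sigma_sets (space M) (E a)) (sigma_sets (space M) (E b \<union> E c))"
proof -
  define G where "G = case_bool {a} {b, c}"
  have "indep_sets (\<lambda>j. sigma_sets (space M) (\<Union>i\<in>G j. E i)) UNIV"
  proof (rule indep_sets_collect_sigma)
    show "indep_sets E (\<Union>j\<in>UNIV. G j)"
      by (rule indep_sets_mono_index[OF _ indep]) (use assms in \<open>auto simp: G_def UNIV_bool\<close>)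
    show "Int_stable (E i)" if "i \<in> G j" for i j
      using that assms by (cases j) (auto simp: G_def)
    show "disjoint_family_on G UNIV"
      using assms by (auto simp: disjoint_family_on_def G_def split: bool.split)
  qed
  moreover have "(\<lambda>j. sigma_sets (space M) (\<Union>i\<in>G j. E i))
      = case_bool (sigma_sets (space M) (E a)) (sigma_sets (space M) (E b \<union> E c))"
    by (rule ext) (simp add: G_def split: bool.split)
  ultimately show ?thesis by (simp add: indep_set_def)
qed

lemma (in prob_space) indep_set_integral_mult:
  fixes U V :: "'a \<Rightarrow> real"
  assumes indep: "indep_set F G"
    and "random_variable borel U" "random_variable borel V"
    and "\<And>A. A \<in> sets borel \<Longrightarrow> U -` A \<inter> space M \<in> F"
    and "\<And>A. A \<in> sets borel \<Longrightarrow> V -` A \<inter> space M \<in> G"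
    and "integrable M U" "integrable M V"
  shows "(\<integral>\<omega>. U \<omega> * V \<omega> \<partial>M) = (\<integral>\<omega>. U \<omega> \<partial>M) * (\<integral>\<omega>. V \<omega> \<partial>M)"
proof (rule indep_var_lebesgue_integral)
  show "indep_var borel U borel V"
    unfolding indep_var_def indep_vars_def2
  proof
    show "\<forall>i\<in>UNIV. random_variable (case_bool borel borel i) (case_bool U V i)"
      using assms by (auto split: bool.split)
    show "indep_sets (\<lambda>i. {case_bool U V i -` A \<inter> space M |A. A \<in> sets (case_bool borel borel i)}) UNIV"
      using indep unfolding indep_set_def
      by (rule indep_sets_mono_sets) (use assms in \<open>auto split: bool.split\<close>)
  qed
qed (use assms in auto)

lemma (in prob_space) indep_sets_integral_mult_Pair:
  fixes f :: "'u \<Rightarrow> real" and k :: "'v \<times> 'x \<Rightarrow> real"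
  assumes indep: "indep_sets E K" and "a \<in> K" "b \<in> K" "c \<in> K" "a \<noteq> b" "a \<noteq> c"
    and Ea: "E a = {U -` A \<inter> space M | A. A \<in> sets N0}"
    and Eb: "E b = {V -` A \<inter> space M | A. A \<in> sets N1}"
    and Ec: "E c = {W -` A \<inter> space M | A. A \<in> sets N2}"
    and [measurable]: "random_variable N0 U" "random_variable N1 V" "random_variable N2 W"
      "f \<in> borel_measurable N0" "k \<in> borel_measurable (N1 \<Otimes>\<^sub>M N2)"
    and "integrable M (\<lambda>\<omega>. f (U \<omega>))" "integrable M (\<lambda>\<omega>. k (V \<omega>, W \<omega>))"
  shows "(\<integral>\<omega>. f (U \<omega>) * k (V \<omega>, W \<omega>) \<partial>M) = (\<integral>\<omega>. f (U \<omega>) \<partial>M) * (\<integral>\<omega>. k (V \<omega>, W \<omega>) \<partial>M)"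
proof (rule indep_set_integral_mult)
  show "indep_set (sigma_sets (space M) (E a)) (sigma_sets (space M) (E b \<union> E c))"
    using assms by (intro indep_set_sigma_sets_Un) (auto simp: Int_stable_vimage_sets)
  show "(\<lambda>\<omega>. f (U \<omega>)) -` A \<inter> space M \<in> sigma_sets (space M) (E a)" if "A \<in> sets borel" for A
  proof -
    have "(\<lambda>\<omega>. f (U \<omega>)) -` A \<inter> space M = U -` (f -` A \<inter> space N0) \<inter> space M"
      using measurable_space[of U M N0] by auto
    also have "\<dots> \<in> E a"
      using measurable_sets[OF \<open>f \<in> borel_measurable N0\<close> that] unfolding Ea by blast
    finally show ?thesis by (rule sigma_sets.Basic)
  qed
  show "(\<lambda>\<omega>. k (V \<omega>, W \<omega>)) -` A \<inter> space M \<in> sigma_sets (space M) (E b \<union> E c)"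
    if "A \<in> sets borel" for A
  proof -
    let ?S = "sigma (space M) (E b \<union> E c)"
    have "(\<lambda>\<omega>. k (V \<omega>, W \<omega>)) \<in> borel_measurable ?S"
      unfolding Eb Ec
      by (rule measurable_compose[OF measurable_Pair_sigma_vimage_sets])
         (auto intro: measurable_space)
    then have "(\<lambda>\<omega>. k (V \<omega>, W \<omega>)) -` A \<inter> space ?S \<in> sets ?S" using that by measurable
    moreover have "E b \<union> E c \<subseteq> Pow (space M)" by (auto simp: Eb Ec)
    ultimately show ?thesis by simp
  qed
qed (use assms in auto)

lemma (in prob_space)
  assumes indep: "indep4 N1 X1 N2 X2 N3 X3 N4 X4"
    and f: "f \<in> borel_measurable N1" "integrable M (\<lambda>\<omega>. f (X1 \<omega>))"
  shows indep4_cov_Pair23_eq_0: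
      "k \<in> borel_measurable (N2 \<Otimes>\<^sub>M N3) \<Longrightarrow> integrable M (\<lambda>\<omega>. k (X2 \<omega>, X3 \<omega>)) \<Longrightarrow>
       cov M (\<lambda>\<omega>. f (X1 \<omega>)) (\<lambda>\<omega>. k (X2 \<omega>, X3 \<omega>)) = 0"
    and indep4_cov_Pair24_eq_0:
      "l \<in> borel_measurable (N2 \<Otimes>\<^sub>M N4) \<Longrightarrow> integrable M (\<lambda>\<omega>. l (X2 \<omega>, X4 \<omega>)) \<Longrightarrow>
       cov M (\<lambda>\<omega>. f (X1 \<omega>)) (\<lambda>\<omega>. l (X2 \<omega>, X4 \<omega>)) = 0"
proof -
  define E where "E = (\<lambda>i::nat.
        if i = 0 then {X1 -` A \<inter> space M | A. A \<in> sets N1}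
        else if i = 1 then {X2 -` A \<inter> space M | A. A \<in> sets N2}
        else if i = 2 then {X3 -` A \<inter> space M | A. A \<in> sets N3}
        else {X4 -` A \<inter> space M | A. A \<in> sets N4})"
  have E: "indep_sets E {0, 1, 2, 3}" and rv: "random_variable N1 X1" "random_variable N2 X2"
    "random_variable N3 X3" "random_variable N4 X4"
    using indep unfolding indep4_def E_def by auto
  show "cov M (\<lambda>\<omega>. f (X1 \<omega>)) (\<lambda>\<omega>. k (X2 \<omega>, X3 \<omega>)) = 0"
    if "k \<in> borel_measurable (N2 \<Otimes>\<^sub>M N3)" "integrable M (\<lambda>\<omega>. k (X2 \<omega>, X3 \<omega>))"
    unfolding cov_def
    by (simp add: indep_sets_integral_mult_Pair[OF E, of 0 1 2 X1 N1 X2 N2 X3 N3] E_def rv f that)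
  show "cov M (\<lambda>\<omega>. f (X1 \<omega>)) (\<lambda>\<omega>. l (X2 \<omega>, X4 \<omega>)) = 0"
    if "l \<in> borel_measurable (N2 \<Otimes>\<^sub>M N4)" "integrable M (\<lambda>\<omega>. l (X2 \<omega>, X4 \<omega>))"
    unfolding cov_def
    by (simp add: indep_sets_integral_mult_Pair[OF E, of 0 1 3 X1 N1 X2 N2 X4 N4] E_def rv f that)
qed

section \<open>Moment equations of the structural causal model\<close>

lemma (in prob_space) cross_cov_eq_cov:
  assumes "integrable M (\<lambda>\<omega>. U \<omega> $ i)" "cov_integrable M (\<lambda>\<omega>. U \<omega> $ i) (\<lambda>\<omega>. V \<omega> $ j)"
  shows "cross_cov M U V $ i $ j = cov M (\<lambda>\<omega>. U \<omega> $ i) (\<lambda>\<omega>. V \<omega> $ j)"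
  using centered_integral_eq_cov[OF assms] by (simp add: cross_cov_def)

lemma (in prob_space) cross_cov_vec_eq_cov:
  assumes "integrable M (\<lambda>\<omega>. U \<omega> $ i)" "cov_integrable M (\<lambda>\<omega>. U \<omega> $ i) Y"
  shows "cross_cov_vec M U Y $ i = cov M (\<lambda>\<omega>. U \<omega> $ i) Y"
  using centered_integral_eq_cov[OF assms] by (simp add: cross_cov_vec_def)

lemma SCM_X_noise_cov_integrable:
  fixes X e :: "'w \<Rightarrow> real^'d" and I :: "'w \<Rightarrow> real^'m"
  assumes SCM: "\<forall>\<omega>\<in>space M. X \<omega> = B *v X \<omega> + A *v I \<omega> + e \<omega>"
    and I: "\<And>l. cov_integrable M u (\<lambda>\<omega>. I \<omega> $ l)"
    and X: "\<And>j. cov_integrable M u (\<lambda>\<omega>. X \<omega> $ j)"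
  shows "cov_integrable M u (\<lambda>\<omega>. e \<omega> $ k)"
proof -
  have "e \<omega> $ k = X \<omega> $ k - (\<Sum>l\<in>UNIV. B $ k $ l * X \<omega> $ l) - (\<Sum>l\<in>UNIV. A $ k $ l * I \<omega> $ l)"
    if "\<omega> \<in> space M" for \<omega>
  proof -
    have "e \<omega> = X \<omega> - B *v X \<omega> - A *v I \<omega>"
      using SCM that by (metis add_diff_cancel_left' diff_diff_eq)
    then show ?thesis by (simp add: matrix_vector_mult_def)
  qed
  then show ?thesis
    by (subst cov_integrable_cong) (auto intro!: cov_integrable_diff cov_integrable_sum I X)
qed

lemma SCM_Y_noise_cov_integrable:
  fixes X :: "'w \<Rightarrow> real^'d"
  assumes SCM: "\<forall>\<omega>\<in>space M. Y \<omega> = X \<omega> \<bullet> \<beta> + e \<omega>"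
    and X: "\<And>j. cov_integrable M u (\<lambda>\<omega>. X \<omega> $ j)" and Y: "cov_integrable M u Y"
  shows "cov_integrable M u e"
proof -
  have "e \<omega> = Y \<omega> - (\<Sum>j\<in>UNIV. \<beta> $ j * X \<omega> $ j)" if "\<omega> \<in> space M" for \<omega>
    using SCM that by (simp add: inner_vec_def mult.commute)
  then show ?thesis
    by (subst cov_integrable_cong) (auto intro!: cov_integrable_diff cov_integrable_sum X Y)
qed

lemma (in prob_space) cross_cov_uncorrelated_noise_X:
  fixes X e :: "'a \<Rightarrow> real^'d" and I :: "'a \<Rightarrow> real^'m"
  assumes SCM: "\<forall>\<omega>\<in>space M. X \<omega> = B *v X \<omega> + A *v I \<omega> + e \<omega>"
    and inv: "invertible (mat 1 - B)"
    and Iint: "\<And>i. integrable M (\<lambda>\<omega>. I \<omega> $ i)"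
    and I: "\<And>i l. cov_integrable M (\<lambda>\<omega>. I \<omega> $ i) (\<lambda>\<omega>. I \<omega> $ l)"
    and X: "\<And>i j. cov_integrable M (\<lambda>\<omega>. I \<omega> $ i) (\<lambda>\<omega>. X \<omega> $ j)"
    and e: "\<And>i k. cov_integrable M (\<lambda>\<omega>. I \<omega> $ i) (\<lambda>\<omega>. e \<omega> $ k)"
    and uncorr: "\<And>i k. cov M (\<lambda>\<omega>. I \<omega> $ i) (\<lambda>\<omega>. e \<omega> $ k) = 0"
  shows "cross_cov M I X = cross_cov M I I ** (transpose A ** transpose (matrix_inv (mat 1 - B)))"
proof -
  define N where "N = matrix_inv (mat 1 - B)"
  have N: "N ** (mat 1 - B) = mat 1"
    using inv unfolding N_def matrix_inv_def invertible_def by (rule someI2_ex) auto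
  have "X \<omega> = (N ** A) *v I \<omega> + N *v e \<omega>" if "\<omega> \<in> space M" for \<omega>
  proof -
    have "(mat 1 - B) *v X \<omega> = A *v I \<omega> + e \<omega>"
      using SCM that by (simp add: matrix_vector_mult_diff_rdistrib algebra_simps)
    then have "X \<omega> = N *v (A *v I \<omega> + e \<omega>)"
      by (metis N matrix_vector_mul_assoc matrix_vector_mul_lid)
    then show ?thesis by (simp add: matrix_vector_right_distrib matrix_vector_mul_assoc)
  qed
  then have "cov M (\<lambda>\<omega>. I \<omega> $ i) (\<lambda>\<omega>. X \<omega> $ j)
      = cov M (\<lambda>\<omega>. I \<omega> $ i)
          (\<lambda>\<omega>. (\<Sum>l\<in>UNIV. (N ** A) $ j $ l * I \<omega> $ l) + (\<Sum>k\<in>UNIV. N $ j $ k * e \<omega> $ k))"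
    for i j by (intro cov_cong) (simp add: matrix_vector_mult_def)
  also have "\<dots> i j = (\<Sum>l\<in>UNIV. (N ** A) $ j $ l * cov M (\<lambda>\<omega>. I \<omega> $ i) (\<lambda>\<omega>. I \<omega> $ l))" for i j
    by (simp add: cov_add cov_integrable_sum cov_sum I e uncorr)
  finally show ?thesis
    by (simp add: vec_eq_iff matrix_matrix_mult_def cross_cov_eq_cov Iint I X N_def
        transpose_def mult.commute)
qed

lemma (in prob_space) cross_cov_vec_uncorrelated_noise_Y:
  fixes X :: "'a \<Rightarrow> real^'d" and I :: "'a \<Rightarrow> real^'m"
  assumes SCM: "\<forall>\<omega>\<in>space M. Y \<omega> = X \<omega> \<bullet> \<beta> + e \<omega>"
    and Iint: "\<And>i. integrable M (\<lambda>\<omega>. I \<omega> $ i)"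
    and X: "\<And>i j. cov_integrable M (\<lambda>\<omega>. I \<omega> $ i) (\<lambda>\<omega>. X \<omega> $ j)"
    and Y: "\<And>i. cov_integrable M (\<lambda>\<omega>. I \<omega> $ i) Y"
    and e: "\<And>i. cov_integrable M (\<lambda>\<omega>. I \<omega> $ i) e"
    and uncorr: "\<And>i. cov M (\<lambda>\<omega>. I \<omega> $ i) e = 0"
  shows "cross_cov_vec M I Y = cross_cov M I X *v \<beta>"
proof -
  have "cov M (\<lambda>\<omega>. I \<omega> $ i) Y = cov M (\<lambda>\<omega>. I \<omega> $ i) (\<lambda>\<omega>. (\<Sum>j\<in>UNIV. \<beta> $ j * X \<omega> $ j) + e \<omega>)"
    for i using SCM by (intro cov_cong) (simp add: inner_vec_def mult.commute)
  also have "\<dots> i = (\<Sum>j\<in>UNIV. \<beta> $ j * cov M (\<lambda>\<omega>. I \<omega> $ i) (\<lambda>\<omega>. X \<omega> $ j))" for i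
    by (simp add: cov_add cov_integrable_sum cov_sum X e uncorr)
  finally show ?thesis
    by (simp add: vec_eq_iff matrix_vector_mult_def cross_cov_eq_cov cross_cov_vec_eq_cov
        Iint X Y mult.commute)
qed

lemma (in prob_space) cross_cov_SCM_X:
  fixes X :: "'a \<Rightarrow> real^'d" and I :: "'a \<Rightarrow> real^'m" and H :: "'a \<Rightarrow> real^'q"
  assumes indep: "indep4 borel I borel H NX eX NY eY"
    and hmeas: "h \<in> borel_measurable (borel \<Otimes>\<^sub>M NX)"
    and SCM: "\<forall>\<omega>\<in>space M. X \<omega> = B *v X \<omega> + A *v I \<omega> + h (H \<omega>, eX \<omega>)"
    and inv: "invertible (mat 1 - B)"
    and Iint: "\<And>i. integrable M (\<lambda>\<omega>. I \<omega> $ i)"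
    and I: "\<And>i l. cov_integrable M (\<lambda>\<omega>. I \<omega> $ i) (\<lambda>\<omega>. I \<omega> $ l)"
    and X: "\<And>i j. cov_integrable M (\<lambda>\<omega>. I \<omega> $ i) (\<lambda>\<omega>. X \<omega> $ j)"
  shows "cross_cov M I X = cross_cov M I I ** (transpose A ** transpose (matrix_inv (mat 1 - B)))"
proof -
  have noise: "cov_integrable M (\<lambda>\<omega>. I \<omega> $ i) (\<lambda>\<omega>. h (H \<omega>, eX \<omega>) $ k)" for i k
    using SCM I X by (rule SCM_X_noise_cov_integrable)
  have "(\<lambda>p. h p $ k) \<in> borel_measurable (borel \<Otimes>\<^sub>M NX)" for k
    using measurable_compose[OF hmeas, of "\<lambda>x. x $ k" borel] by simp
  then have uncorr: "cov M (\<lambda>\<omega>. I \<omega> $ i) (\<lambda>\<omega>. h (H \<omega>, eX \<omega>) $ k) = 0" for i k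
    using indep4_cov_Pair23_eq_0[OF indep, of "\<lambda>x. x $ i" "\<lambda>p. h p $ k"] Iint noise
    by (simp add: cov_integrable_def)
  show ?thesis by (rule cross_cov_uncorrelated_noise_X[OF SCM inv Iint I X noise uncorr])
qed

lemma (in prob_space) cross_cov_vec_SCM_Y:
  fixes X :: "'a \<Rightarrow> real^'d" and I :: "'a \<Rightarrow> real^'m" and H :: "'a \<Rightarrow> real^'q"
  assumes indep: "indep4 borel I borel H NX eX NY eY"
    and gmeas: "g \<in> borel_measurable (borel \<Otimes>\<^sub>M NY)"
    and SCM: "\<forall>\<omega>\<in>space M. Y \<omega> = X \<omega> \<bullet> \<beta> + g (H \<omega>, eY \<omega>)"
    and Iint: "\<And>i. integrable M (\<lambda>\<omega>. I \<omega> $ i)"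
    and X: "\<And>i j. cov_integrable M (\<lambda>\<omega>. I \<omega> $ i) (\<lambda>\<omega>. X \<omega> $ j)"
    and Y: "\<And>i. cov_integrable M (\<lambda>\<omega>. I \<omega> $ i) Y"
  shows "cross_cov_vec M I Y = cross_cov M I X *v \<beta>"
proof -
  have noise: "cov_integrable M (\<lambda>\<omega>. I \<omega> $ i) (\<lambda>\<omega>. g (H \<omega>, eY \<omega>))" for i
    using SCM X Y by (rule SCM_Y_noise_cov_integrable)
  then have uncorr: "cov M (\<lambda>\<omega>. I \<omega> $ i) (\<lambda>\<omega>. g (H \<omega>, eY \<omega>)) = 0" for i
    using indep4_cov_Pair24_eq_0[OF indep, of "\<lambda>x. x $ i" g] gmeas Iint
    by (simp add: cov_integrable_def)
  show ?thesis by (rule cross_cov_vec_uncorrelated_noise_Y[OF SCM Iint X Y noise uncorr])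
qed

theorem theorem1:
  fixes M :: "'w measure"
    and NX :: "'ex measure" and NY :: "'ey measure"
    and X :: "'w \<Rightarrow> real^'d" and Y :: "'w \<Rightarrow> real"
    and H :: "'w \<Rightarrow> real^'q" and I :: "'w \<Rightarrow> real^'m"
    and eX :: "'w \<Rightarrow> 'ex" and eY :: "'w \<Rightarrow> 'ey"
    and B :: "real^'d^'d" and A :: "real^'m^'d" and \<beta>s :: "real^'d"
    and h :: "(real^'q) \<times> 'ex \<Rightarrow> real^'d" and g :: "(real^'q) \<times> 'ey \<Rightarrow> real"
  assumes P: "prob_space M"
    and hmeas: "h \<in> borel_measurable (borel \<Otimes>\<^sub>M NX)"
    and gmeas: "g \<in> borel_measurable (borel \<Otimes>\<^sub>M NY)"
    and Xmeas: "X \<in> borel_measurable M" and Ymeas: "Y \<in> borel_measurable M"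
    and indep: "prob_space.indep4 M borel I borel H NX eX NY eY"
    and SCM_X: "\<forall>\<omega>\<in>space M. X \<omega> = B *v X \<omega> + A *v I \<omega> + h (H \<omega>, eX \<omega>)"
    and SCM_Y: "\<forall>\<omega>\<in>space M. Y \<omega> = X \<omega> \<bullet> \<beta>s + g (H \<omega>, eY \<omega>)"
    and invB: "invertible (mat 1 - B)"
    and covI_ex: "\<forall>i k. integrable M (\<lambda>\<omega>. I \<omega> $ i) \<and> integrable M (\<lambda>\<omega>. I \<omega> $ i * I \<omega> $ k)"
    and covIX_ex: "\<forall>i j. integrable M (\<lambda>\<omega>. X \<omega> $ j) \<and> integrable M (\<lambda>\<omega>. I \<omega> $ i * X \<omega> $ j)"
    and covIY_ex: "integrable M Y \<and> (\<forall>i. integrable M (\<lambda>\<omega>. I \<omega> $ i * Y \<omega>))"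
    and covI_inv: "invertible (cross_cov M I I)"
  defines "C \<equiv> transpose A ** transpose (matrix_inv (mat 1 - B))"
    and "PA \<equiv> supp_vec \<beta>s"
    and "\<B> \<equiv> {\<beta>. cross_cov M I X *v \<beta> = cross_cov_vec M I Y}"
  shows
    "(sub_rank C PA = card PA \<and>
      (\<forall>S. sub_rank C S \<le> sub_rank C PA \<and> sub_im C S \<noteq> sub_im C PA \<longrightarrow>
            C *v restr PA \<beta>s \<notin> sub_im C S)
      \<longrightarrow> \<beta>s \<in> \<B> \<and> (\<forall>\<beta>\<in>\<B>. l0 \<beta>s \<le> l0 \<beta>))
     \<and>
     (sub_rank C PA = card PA \<and>
      (\<forall>S. sub_rank C S \<le> sub_rank C PA \<and> sub_im C S \<noteq> sub_im C PA \<longrightarrow>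
            C *v restr PA \<beta>s \<notin> sub_im C S) \<and>
      (\<forall>S. card S = card PA \<and> S \<noteq> PA \<longrightarrow> sub_im C S \<noteq> sub_im C PA)
      \<longrightarrow> \<beta>s \<in> \<B> \<and> (\<forall>\<beta>\<in>\<B>. l0 \<beta>s \<le> l0 \<beta>) \<and>
          (\<forall>\<beta>\<in>\<B>. l0 \<beta> \<le> l0 \<beta>s \<longrightarrow> \<beta> = \<beta>s))"
proof -
  interpret prob_space M by (rule P)
  have Iint: "integrable M (\<lambda>\<omega>. I \<omega> $ i)"
    and I: "cov_integrable M (\<lambda>\<omega>. I \<omega> $ i) (\<lambda>\<omega>. I \<omega> $ l)"
    and X: "cov_integrable M (\<lambda>\<omega>. I \<omega> $ i) (\<lambda>\<omega>. X \<omega> $ j)"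
    and Y: "cov_integrable M (\<lambda>\<omega>. I \<omega> $ i) Y" for i l j
    using covI_ex covIX_ex covIY_ex by (auto simp: cov_integrable_def)
  have KX: "cross_cov M I X = cross_cov M I I ** C"
    unfolding C_def using indep hmeas SCM_X invB Iint I X by (rule cross_cov_SCM_X)
  have KY: "cross_cov_vec M I Y = cross_cov M I X *v \<beta>s"
    using indep gmeas SCM_Y Iint X Y by (rule cross_cov_vec_SCM_Y)
  have "inj ((*v) (cross_cov M I I))"
    using covI_inv invertible_left_inverse matrix_left_invertible_injective by blast
  then have feasible: "\<B> = {\<beta>. C *v \<beta> = C *v \<beta>s}"
    by (simp add: \<B>_def KY KX matrix_vector_mul_assoc[symmetric] inj_eq)
  show ?thesis
    unfolding feasible PA_def restr_supp_vec
    by (auto intro: sparsest_solution sparsest_solution_unique)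
qed

end
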